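(* Let $a,b,c,d\in\mathbb R$, $\delta:=c+d-a-b$, and assume $a,b,\delta>0$ and $d-a,\ d-b,\ c+1-a,\ c-b\notin\{0,-1,-2,\dots\}$. Let $q^{(n)}$, $n\ge 0$, be the type I linear forms defined in the context. Then for every integer $n\ge 0$, $$q^{(2n)}(1)=\frac{1}{(2n)!}\,\frac{(c)_{3n}(d)_{3n}}{(a)_{2n}(b)_{2n}},\qquad q^{(2n+1)}(1)=\frac{1}{(2n+1)!}\,\frac{(c)_{3n+2}(d)_{3n+1}}{(a)_{2n+1}(b)_{2n+1}}.$$
   Context: $(x)_k=x(x+1)\cdots(x+k-1)$, $(x)_0=1$, and ${}_2F_1$ is the Gauss hypergeometric function. On $(0,1)$ define $w_1(x)={}_2F_1(c-b,d-b;\delta;1-x)$, $w_2(x)=\frac{c}{b}\,{}_2F_1(c-b,d-b-1;\delta;1-x)$ (both extend continuously to $x=1$ with value $1$, resp. $c/b$), and $d\mu(x)=\frac{\Gamma(c)\Gamma(d)}{\Gamma(a)\Gamma(b)\Gamma(\delta)}x^{a-1}(1-x)^{\delta-1}dx$. Under the assumptions, for each $n\ge0$ there are unique polynomials $A_1^{(n)},A_2^{(n)}$ with $\deg A_1^{(n)}\le\lfloor n/2\rfloor$, $\deg A_2^{(n)}\le\lfloor (n-1)/2\rfloor$ ($A_2^{(0)}=0$) such that $q^{(n)}:=A_1^{(n)}w_1+A_2^{(n)}w_2$ satisfies $\int_0^1x^kq^{(n)}(x)\,d\mu(x)=0$ for $0\le k\le n-1$ and $\int_0^1x^nq^{(n)}(x)\,d\mu(x)=1$.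 $q^{(n)}(1)$ means $A_1^{(n)}(1)w_1(1)+A_2^{(n)}(1)w_2(1)$. *)

theory Defs
  imports "HOL-Analysis.Analysis" "HOL-Computational_Algebra.Polynomial"
begin

text \<open>Gauss hypergeometric function 2F1(a,b;c;z), as its power series
  (used here only for 0 <= z < 1, where it converges).\<close>
definition hyp2F1 :: "real \<Rightarrow> real \<Rightarrow> real \<Rightarrow> real \<Rightarrow> real" where
  "hyp2F1 a b c z =
     (\<Sum>k. pochhammer a k * pochhammer b k / (pochhammer c k * fact k) * z ^ k)"

definition not_nonpos_int :: "real \<Rightarrow> bool" where
  "not_nonpos_int x \<longleftrightarrow> (\<forall>k::nat. x \<noteq> - real k)"

definition w1 :: "real \<Rightarrow> real \<Rightarrow> real \<Rightarrow> real \<Rightarrow> real \<Rightarrow> real" where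
  "w1 a b c d x = hyp2F1 (c - b) (d - b) (c + d - a - b) (1 - x)"

definition w2 :: "real \<Rightarrow> real \<Rightarrow> real \<Rightarrow> real \<Rightarrow> real \<Rightarrow> real" where
  "w2 a b c d x = c / b * hyp2F1 (c - b) (d - b - 1) (c + d - a - b) (1 - x)"

definition mu_density :: "real \<Rightarrow> real \<Rightarrow> real \<Rightarrow> real \<Rightarrow> real \<Rightarrow> real" where
  "mu_density a b c d x =
     Gamma c * Gamma d / (Gamma a * Gamma b * Gamma (c + d - a - b))
     * x powr (a - 1) * (1 - x) powr (c + d - a - b - 1)"

definition lin_form :: "real \<Rightarrow> real \<Rightarrow> real \<Rightarrow> real \<Rightarrow> real poly \<Rightarrow> real poly \<Rightarrow> real \<Rightarrow> real" where
  "lin_form a b c d A1 A2 x = poly A1 x * w1 a b c d x + poly A2 x * w2 a b c d x"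

definition typeI :: "real \<Rightarrow> real \<Rightarrow> real \<Rightarrow> real \<Rightarrow> nat \<Rightarrow> real poly \<Rightarrow> real poly \<Rightarrow> bool" where
  "typeI a b c d n A1 A2 \<longleftrightarrow>
     degree A1 \<le> n div 2 \<and>
     (if n = 0 then A2 = 0 else degree A2 \<le> (n - 1) div 2) \<and>
     (\<forall>k<n. (LINT x:{0<..<1}|lborel. x ^ k * lin_form a b c d A1 A2 x * mu_density a b c d x) = 0) \<and>
     (LINT x:{0<..<1}|lborel. x ^ n * lin_form a b c d A1 A2 x * mu_density a b c d x) = 1"

end

(*
  Expanding w1 and w2 in powers of 1 - x and integrating termwise against the Beta
  density, Gauss's summation theorem gives the moments in closed form:
    int x^m w1 dmu = (a)_m (b)_m / ((c)_m (d)_m),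
    int x^m w2 dmu = (c/b) (a)_m (b)_(m+1) / ((c)_(m+1) (d)_m).
  Let p = ceil(n/2), r = floor(n/2) and
    lambda_k = (-1)^(n-k) / (k! (n-k)!) * (c)_(p+k) (d)_(r+k) / ((a)_k (b)_k).
  Then sum_(k<=n) lambda_k int x^(k+i) w1 dmu = 1 for i <= r, and likewise for the
  2F1 part of w2 when i < p: the k-th summand is (-1)^(n-k) binom(n,k) / n! times a monic
  polynomial of degree n evaluated at k, and the n-th finite difference of such a
  polynomial is n!. Hence sum_(k<=n) lambda_k int x^k q^(n) dmu equals
  A1(1) + (c/b) A2(1) = q^(n)(1) on the one hand and, by the orthogonality conditions,
  lambda_n on the other.

  Gauss's theorem itself follows from the contiguous relation
  g (g - al - be) F(g) = (g - al) (g - be) F(g + 1) for F(g) = 2F1(al, be; g; 1):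
  iterating it M times and letting M tend to infinity, F(g + M) tends to 1 and the
  Pochhammer quotient tends to the Gamma quotient.
*)
theory Submission
  imports Defs "HOL-Real_Asymp.Real_Asymp"
begin

section \<open>Pochhammer symbols and finite differences\<close>

lemma pochhammer_mono:
  fixes x y :: real
  assumes "0 < x" "x \<le> y"
  shows "pochhammer x n \<le> pochhammer y n"
proof (induction n)
  case (Suc n)
  have "(x + n) * pochhammer x n \<le> (y + n) * pochhammer y n"
    using Suc assms by (intro mult_mono) (auto simp: pochhammer_nonneg)
  then show ?case
    by (simp add: pochhammer_rec')
qed simp

lemma pochhammer_Suc_ge:
  fixes x :: real
  assumes "0 \<le> x"
  shows "x \<le> pochhammer x (Suc n)"
proof -
  have "1 \<le> pochhammer (1::real) n"
    by (simp flip: pochhammer_fact)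
  also have "\<dots> \<le> pochhammer (x + 1) n"
    using assms by (intro pochhammer_mono) auto
  finally have "x * 1 \<le> x * pochhammer (x + 1) n"
    using assms by (intro mult_left_mono)
  then show ?thesis
    by (simp add: pochhammer_rec)
qed

lemma pochhammer_Suc_LIMSEQ:
  "(\<lambda>n. pochhammer (x::real) (Suc n) / (fact n * real n powr x)) \<longlonglongrightarrow> rGamma x"
proof -
  have "\<forall>\<^sub>F n in sequentially. rGamma_series x n = pochhammer x (Suc n) / (fact n * real n powr x)"
    using eventually_gt_at_top[of "0::nat"]
    by eventually_elim (simp add: rGamma_series_def powr_def)
  with rGamma_series_LIMSEQ[of x] show ?thesis
    by (simp add: tendsto_cong)
qed

lemma Gamma_add_of_nat:
  fixes z :: real
  assumes "z \<notin> \<int>\<^sub>\<le>\<^sub>0"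
  shows "Gamma (z + of_nat n) = pochhammer z n * Gamma z"
  using pochhammer_Gamma[OF assms, of n] Gamma_nonzero[OF assms] by (simp add: field_simps)

lemma coeff_pcompose_linear:
  fixes R :: "'a :: idom poly"
  assumes "degree R \<le> N"
  shows "coeff (pcompose R [:c, 1:]) N = coeff R N"
proof (cases "degree R = N")
  case True
  have "lead_coeff (pcompose R [:c, 1:]) = lead_coeff R"
    by (subst lead_coeff_comp) auto
  with True show ?thesis
    by (simp add: degree_pcompose)
next
  case False
  with assms show ?thesis
    by (simp add: coeff_eq_0 degree_pcompose)
qed

lemma alternating_binomial_sum_poly:
  fixes P :: "'a :: {idom, ring_char_0} poly"
  assumes "degree P \<le> N"
  shows "(\<Sum>k\<le>N. (-1) ^ (N - k) * of_nat (N choose k) * poly P (of_nat k)) = fact N * coeff P N"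
  using assms
proof (induction N arbitrary: P)
  case 0
  then show ?case
    by (auto elim: degree_eq_zeroE)
next
  case (Suc N)
  (* Writing P = a + x R, the constant a is annihilated, and k binom(N+1, k) = (N+1) binom(N, k-1)
     turns the rest into (N+1) times the N-th difference of R(x + 1). *)
  obtain a R where P: "P = pCons a R"
    by (cases P)
  define R' where "R' = pcompose R [:1, 1:]"
  have "degree R \<le> N"
    using Suc.prems by (cases "R = 0") (auto simp: P)
  then have deg_R': "degree R' \<le> N" and coeff_R': "coeff R' N = coeff R N"
    by (simp_all add: R'_def degree_pcompose coeff_pcompose_linear)
  have binomial: "(\<Sum>k\<le>Suc N. (-1) ^ (Suc N - k) * of_nat (Suc N choose k)) = (0 :: 'a)"
    using binomial_ring[of "1::'a" "-1" "Suc N"] by (simp add: mult.commute)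
  have "(\<Sum>k\<le>Suc N. (-1) ^ (Suc N - k) * of_nat (Suc N choose k) * poly P (of_nat k))
      = a * (\<Sum>k\<le>Suc N. (-1) ^ (Suc N - k) * of_nat (Suc N choose k))
        + (\<Sum>k\<le>Suc N. (-1) ^ (Suc N - k) * of_nat (Suc N choose k) * of_nat k * poly R (of_nat k))"
    unfolding P by (simp add: sum_distrib_left algebra_simps flip: sum.distrib)
  also have "(\<Sum>k\<le>Suc N. (-1) ^ (Suc N - k) * of_nat (Suc N choose k) * of_nat k * poly R (of_nat k))
      = (\<Sum>j\<le>N. (-1) ^ (N - j) * (of_nat (Suc N choose Suc j) * of_nat (Suc j)) * poly R' (of_nat j))"
    by (subst sum.atMost_Suc_shift) (simp add: R'_def poly_pcompose algebra_simps)
  also have "\<dots> = of_nat (Suc N) * (\<Sum>j\<le>N. (-1) ^ (N - j) * of_nat (N choose j) * poly R' (of_nat j))"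
  proof -
    have "of_nat (Suc N choose Suc j) * of_nat (Suc j) = (of_nat (Suc N) * of_nat (N choose j) :: 'a)" for j
      by (metis Suc_times_binomial mult.commute of_nat_mult)
    then show ?thesis
      unfolding sum_distrib_left by (intro sum.cong refl) (simp only: mult_ac)
  qed
  finally show ?case
    using Suc.IH[OF deg_R'] binomial by (simp add: coeff_R' P)
qed

definition pochhammer_poly :: "'a :: comm_semiring_1 \<Rightarrow> nat \<Rightarrow> 'a poly" where
  "pochhammer_poly u n = (\<Prod>i<n. [:u + of_nat i, 1:])"

lemma poly_pochhammer_poly [simp]: "poly (pochhammer_poly u n) x = pochhammer (u + x) n"
  by (simp add: pochhammer_poly_def poly_prod pochhammer_prod atLeast0LessThan algebra_simps)

lemma degree_pochhammer_poly [simp]: "degree (pochhammer_poly (u :: 'a :: idom) n) = n"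
  by (simp add: pochhammer_poly_def degree_prod_sum_eq)

lemma lead_coeff_pochhammer_poly [simp]: "lead_coeff (pochhammer_poly (u :: 'a :: idom) n) = 1"
  by (simp add: pochhammer_poly_def lead_coeff_prod)

lemma pochhammer_poly_neq_0 [simp]: "pochhammer_poly (u :: 'a :: idom) n \<noteq> 0"
  using lead_coeff_pochhammer_poly[of u n] by (metis leading_coeff_0_iff zero_neq_one)

lemma poly_eq_sum_lessThan:
  fixes P :: "'a :: comm_semiring_1 poly"
  assumes "\<And>i. i \<ge> n \<Longrightarrow> coeff P i = 0"
  shows "poly P x = (\<Sum>i<n. coeff P i * x ^ i)"
proof (cases "P = 0")
  case False
  then have "degree P < n"
    using assms leading_coeff_neq_0 not_less by blast
  then show ?thesis
    unfolding poly_altdef by (intro sum.mono_neutral_left) (auto simp: coeff_eq_0)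
qed simp

section \<open>Gauss's summation theorem\<close>

definition hyp2F1_coeff :: "real \<Rightarrow> real \<Rightarrow> real \<Rightarrow> nat \<Rightarrow> real" where
  "hyp2F1_coeff \<alpha> \<beta> \<gamma> j = pochhammer \<alpha> j * pochhammer \<beta> j / (pochhammer \<gamma> j * fact j)"

lemma hyp2F1_altdef: "hyp2F1 \<alpha> \<beta> \<gamma> z = (\<Sum>j. hyp2F1_coeff \<alpha> \<beta> \<gamma> j * z ^ j)"
  unfolding hyp2F1_def hyp2F1_coeff_def ..

lemma hyp2F1_at_0 [simp]: "hyp2F1 \<alpha> \<beta> \<gamma> 0 = 1"
  using powser_zero[of "hyp2F1_coeff \<alpha> \<beta> \<gamma>"] by (simp add: hyp2F1_altdef hyp2F1_coeff_def)

lemma hyp2F1_at_1: "hyp2F1 \<alpha> \<beta> \<gamma> 1 = suminf (hyp2F1_coeff \<alpha> \<beta> \<gamma>)"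
  by (simp add: hyp2F1_altdef)

lemma hyp2F1_coeff_0 [simp]: "hyp2F1_coeff \<alpha> \<beta> \<gamma> 0 = 1"
  by (simp add: hyp2F1_coeff_def)

lemma hyp2F1_coeff_Suc:
  assumes "\<gamma> > 0"
  shows "hyp2F1_coeff \<alpha> \<beta> \<gamma> (Suc j)
         = hyp2F1_coeff \<alpha> \<beta> \<gamma> j * ((\<alpha> + j) * (\<beta> + j)) / ((\<gamma> + j) * (j + 1))"
proof -
  have "pochhammer \<gamma> j > 0" "\<gamma> + j > 0"
    using assms by (simp_all add: pochhammer_pos add_pos_nonneg)
  then show ?thesis
    by (simp add: hyp2F1_coeff_def pochhammer_rec' field_simps)
qed

lemma hyp2F1_coeff_shift:
  assumes "\<gamma> > 0"
  shows "hyp2F1_coeff \<alpha> \<beta> (\<gamma> + 1) j = \<gamma> * hyp2F1_coeff \<alpha> \<beta> \<gamma> j / (\<gamma> + j)"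
proof -
  have "pochhammer (\<gamma> + 1) j * \<gamma> = pochhammer \<gamma> j * (\<gamma> + j)"
    by (metis mult.commute pochhammer_rec pochhammer_rec')
  then have shift: "pochhammer (\<gamma> + 1) j = pochhammer \<gamma> j * (\<gamma> + j) / \<gamma>"
    using assms by (simp add: eq_divide_eq)
  have "pochhammer \<gamma> j > 0" "\<gamma> + j > 0"
    using assms by (simp_all add: pochhammer_pos add_pos_nonneg)
  then show ?thesis
    using assms unfolding hyp2F1_coeff_def shift by (simp add: divide_simps)
qed

lemma hyp2F1_coeff_asymp:
  assumes "\<gamma> > 0"
  shows "(\<lambda>n. hyp2F1_coeff \<alpha> \<beta> \<gamma> (Suc n) / real n powr (\<alpha> + \<beta> - \<gamma> - 1))
           \<longlonglongrightarrow> rGamma \<alpha> * rGamma \<beta> / rGamma \<gamma>"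
proof -
  define R where "R x n = pochhammer x (Suc n) / (fact n * real n powr x)" for x n
  have "(\<lambda>n. R \<alpha> n * R \<beta> n / (R \<gamma> n * R 1 n)) \<longlonglongrightarrow> rGamma \<alpha> * rGamma \<beta> / (rGamma \<gamma> * rGamma 1)"
    unfolding R_def using assms
    by (intro tendsto_intros pochhammer_Suc_LIMSEQ) (auto simp: rGamma_eq_zero_iff elim: nonpos_Ints_cases)
  moreover have "\<forall>\<^sub>F n in sequentially. R \<alpha> n * R \<beta> n / (R \<gamma> n * R 1 n)
      = hyp2F1_coeff \<alpha> \<beta> \<gamma> (Suc n) / real n powr (\<alpha> + \<beta> - \<gamma> - 1)"
    using eventually_gt_at_top[of "0::nat"]
  proof eventually_elim
    case (elim n)
    have "pochhammer \<gamma> (Suc n) > 0" "real n powr \<gamma> > 0" "real n > 0" "(fact n :: real) > 0"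
      using assms elim by (simp_all add: pochhammer_pos)
    moreover have "real n powr (\<alpha> + \<beta> - \<gamma> - 1) = real n powr \<alpha> * real n powr \<beta> / (real n powr \<gamma> * real n)"
      using elim by (simp add: powr_add powr_diff)
    ultimately show ?case
      by (simp add: R_def hyp2F1_coeff_def pochhammer_fact[symmetric] field_simps del: fact_Suc)
  qed
  ultimately show ?thesis
    by (simp add: tendsto_cong)
qed

lemma hyp2F1_coeff_bigo:
  assumes "\<gamma> > 0"
  shows "(\<lambda>n. hyp2F1_coeff \<alpha> \<beta> \<gamma> (Suc n)) \<in> O(\<lambda>n. real n powr (\<alpha> + \<beta> - \<gamma> - 1))"
proof (rule bigoI_tendsto[OF hyp2F1_coeff_asymp[OF assms]])
  show "\<forall>\<^sub>F n in sequentially. real n powr (\<alpha> + \<beta> - \<gamma> - 1) \<noteq> 0"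
    using eventually_gt_at_top[of "0::nat"] by eventually_elim simp
qed

lemma summable_hyp2F1_coeff:
  assumes "\<gamma> > 0" "\<gamma> > \<alpha> + \<beta>"
  shows "summable (\<lambda>j. \<bar>hyp2F1_coeff \<alpha> \<beta> \<gamma> j\<bar>)"
proof -
  have "summable (\<lambda>n. norm (real n powr (\<alpha> + \<beta> - \<gamma> - 1)))"
    using assms by (simp add: summable_real_powr_iff)
  moreover have "(\<lambda>n. \<bar>hyp2F1_coeff \<alpha> \<beta> \<gamma> (Suc n)\<bar>) \<in> O(\<lambda>n. real n powr (\<alpha> + \<beta> - \<gamma> - 1))"
    using hyp2F1_coeff_bigo[OF assms(1)] by simp
  ultimately show ?thesis
    by (subst summable_Suc_iff[symmetric]) (rule summable_comparison_test_bigo)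
qed

lemma hyp2F1_coeff_times_index_LIMSEQ:
  assumes "\<gamma> > 0" "\<gamma> > \<alpha> + \<beta>"
  shows "(\<lambda>j. real j * hyp2F1_coeff \<alpha> \<beta> \<gamma> j) \<longlonglongrightarrow> 0"
proof -
  define s where "s = \<alpha> + \<beta> - \<gamma> - 1"
  have "(\<lambda>n. real (Suc n) * real n powr s) \<longlonglongrightarrow> 0"
    using assms unfolding s_def by real_asymp
  then have lim: "(\<lambda>n. hyp2F1_coeff \<alpha> \<beta> \<gamma> (Suc n) / real n powr s * (real (Suc n) * real n powr s))
      \<longlonglongrightarrow> rGamma \<alpha> * rGamma \<beta> / rGamma \<gamma> * 0"
    unfolding s_def by (intro tendsto_mult hyp2F1_coeff_asymp assms)
  have ev: "\<forall>\<^sub>F n in sequentially.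
      hyp2F1_coeff \<alpha> \<beta> \<gamma> (Suc n) / real n powr s * (real (Suc n) * real n powr s)
      = real (Suc n) * hyp2F1_coeff \<alpha> \<beta> \<gamma> (Suc n)"
    using eventually_gt_at_top[of "0::nat"] by eventually_elim simp
  have "(\<lambda>n. real (Suc n) * hyp2F1_coeff \<alpha> \<beta> \<gamma> (Suc n)) \<longlonglongrightarrow> 0"
    using lim unfolding tendsto_cong[OF ev] by simp
  then show ?thesis
    by (rule LIMSEQ_imp_Suc)
qed

lemma hyp2F1_coeff_contiguous:
  assumes "\<gamma> > 0"
  shows "\<gamma> * (\<gamma> - \<alpha> - \<beta>) * hyp2F1_coeff \<alpha> \<beta> \<gamma> j - (\<gamma> - \<alpha>) * (\<gamma> - \<beta>) * hyp2F1_coeff \<alpha> \<beta> (\<gamma> + 1) j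
         = \<gamma> * j * hyp2F1_coeff \<alpha> \<beta> \<gamma> j - \<gamma> * Suc j * hyp2F1_coeff \<alpha> \<beta> \<gamma> (Suc j)"
proof -
  define h where "h = hyp2F1_coeff \<alpha> \<beta> \<gamma> j"
  have pos: "\<gamma> + j > 0"
    using assms by (simp add: add_pos_nonneg)
  have "\<gamma> * (\<gamma> - \<alpha> - \<beta>) * h - (\<gamma> - \<alpha>) * (\<gamma> - \<beta>) * (\<gamma> * h / (\<gamma> + j))
      = \<gamma> * h / (\<gamma> + j) * ((\<gamma> - \<alpha> - \<beta>) * (\<gamma> + j) - (\<gamma> - \<alpha>) * (\<gamma> - \<beta>))"
    using pos by (simp add: field_simps)
  also have "(\<gamma> - \<alpha> - \<beta>) * (\<gamma> + j) - (\<gamma> - \<alpha>) * (\<gamma> - \<beta>) = j * (\<gamma> + j) - (\<alpha> + j) * (\<beta> + j)"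
    by (simp add: algebra_simps)
  also have "\<gamma> * h / (\<gamma> + j) * (j * (\<gamma> + j) - (\<alpha> + j) * (\<beta> + j))
      = \<gamma> * j * h - \<gamma> * Suc j * (h * ((\<alpha> + j) * (\<beta> + j)) / ((\<gamma> + j) * (j + 1)))"
    using pos by (simp add: divide_simps) (simp add: algebra_simps)
  finally show ?thesis
    unfolding hyp2F1_coeff_shift[OF assms] hyp2F1_coeff_Suc[OF assms] h_def .
qed

lemma hyp2F1_1_contiguous:
  assumes "\<gamma> > 0" "\<gamma> > \<alpha> + \<beta>"
  shows "\<gamma> * (\<gamma> - \<alpha> - \<beta>) * hyp2F1 \<alpha> \<beta> \<gamma> 1 = (\<gamma> - \<alpha>) * (\<gamma> - \<beta>) * hyp2F1 \<alpha> \<beta> (\<gamma> + 1) 1"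
proof -
  define e where "e j = \<gamma> * j * hyp2F1_coeff \<alpha> \<beta> \<gamma> j" for j
  have "e \<longlonglongrightarrow> \<gamma> * 0"
    unfolding e_def mult.assoc by (intro tendsto_mult_left hyp2F1_coeff_times_index_LIMSEQ assms)
  then have telescope: "(\<lambda>j. e j - e (Suc j)) sums (e 0 - 0)"
    by (intro telescope_sums') simp
  have "summable (hyp2F1_coeff \<alpha> \<beta> \<gamma>)" "summable (hyp2F1_coeff \<alpha> \<beta> (\<gamma> + 1))"
    using assms summable_hyp2F1_coeff[of \<gamma> \<alpha> \<beta>] summable_hyp2F1_coeff[of "\<gamma> + 1" \<alpha> \<beta>]
    by (auto intro: summable_rabs_cancel)
  then have "(\<lambda>j. \<gamma> * (\<gamma> - \<alpha> - \<beta>) * hyp2F1_coeff \<alpha> \<beta> \<gamma> j - (\<gamma> - \<alpha>) * (\<gamma> - \<beta>) * hyp2F1_coeff \<alpha> \<beta> (\<gamma> + 1) j)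
      sums (\<gamma> * (\<gamma> - \<alpha> - \<beta>) * hyp2F1 \<alpha> \<beta> \<gamma> 1 - (\<gamma> - \<alpha>) * (\<gamma> - \<beta>) * hyp2F1 \<alpha> \<beta> (\<gamma> + 1) 1)"
    unfolding hyp2F1_at_1 by (intro sums_diff sums_mult summable_sums)
  moreover have "(\<lambda>j. \<gamma> * (\<gamma> - \<alpha> - \<beta>) * hyp2F1_coeff \<alpha> \<beta> \<gamma> j - (\<gamma> - \<alpha>) * (\<gamma> - \<beta>) * hyp2F1_coeff \<alpha> \<beta> (\<gamma> + 1) j)
      = (\<lambda>j. e j - e (Suc j))"
    by (simp only: e_def hyp2F1_coeff_contiguous[OF assms(1)])
  ultimately have "(\<lambda>j. e j - e (Suc j))
      sums (\<gamma> * (\<gamma> - \<alpha> - \<beta>) * hyp2F1 \<alpha> \<beta> \<gamma> 1 - (\<gamma> - \<alpha>) * (\<gamma> - \<beta>) * hyp2F1 \<alpha> \<beta> (\<gamma> + 1) 1)"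
    by simp
  from sums_unique2[OF this telescope] show ?thesis
    by (simp add: e_def)
qed

lemma hyp2F1_1_pochhammer_shift:
  assumes "\<gamma> > 0" "\<gamma> > \<alpha> + \<beta>"
  shows "hyp2F1 \<alpha> \<beta> \<gamma> 1 * (pochhammer \<gamma> M * pochhammer (\<gamma> - \<alpha> - \<beta>) M)
         = pochhammer (\<gamma> - \<alpha>) M * pochhammer (\<gamma> - \<beta>) M * hyp2F1 \<alpha> \<beta> (\<gamma> + M) 1"
proof (induction M)
  case (Suc M)
  have "hyp2F1 \<alpha> \<beta> \<gamma> 1 * (pochhammer \<gamma> (Suc M) * pochhammer (\<gamma> - \<alpha> - \<beta>) (Suc M))
      = hyp2F1 \<alpha> \<beta> \<gamma> 1 * (pochhammer \<gamma> M * pochhammer (\<gamma> - \<alpha> - \<beta>) M) * ((\<gamma> + M) * (\<gamma> + M - \<alpha> - \<beta>))"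
    by (simp add: pochhammer_rec' algebra_simps)
  also have "\<dots> = pochhammer (\<gamma> - \<alpha>) M * pochhammer (\<gamma> - \<beta>) M * ((\<gamma> + M) * (\<gamma> + M - \<alpha> - \<beta>) * hyp2F1 \<alpha> \<beta> (\<gamma> + M) 1)"
    unfolding Suc.IH by (simp only: ac_simps)
  also have "(\<gamma> + M) * (\<gamma> + M - \<alpha> - \<beta>) * hyp2F1 \<alpha> \<beta> (\<gamma> + M) 1
      = (\<gamma> + M - \<alpha>) * (\<gamma> + M - \<beta>) * hyp2F1 \<alpha> \<beta> (\<gamma> + M + 1) 1"
    using assms by (intro hyp2F1_1_contiguous) auto
  finally show ?case
    by (simp add: pochhammer_rec' algebra_simps)
qed simp

lemma hyp2F1_coeff_LIMSEQ_shift: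
  assumes "\<gamma> > 0"
  shows "(\<lambda>M. hyp2F1_coeff \<alpha> \<beta> (\<gamma> + real M) j) \<longlonglongrightarrow> (if j = 0 then 1 else 0)"
proof (cases j)
  case (Suc i)
  have "filterlim (\<lambda>M. \<gamma> + real M) at_top sequentially"
    by (intro filterlim_tendsto_add_at_top[OF tendsto_const] filterlim_real_sequentially)
  moreover have "\<forall>\<^sub>F M in sequentially. \<gamma> + real M \<le> pochhammer (\<gamma> + real M) (Suc i)"
    using assms by (intro always_eventually allI pochhammer_Suc_ge) simp
  ultimately have "filterlim (\<lambda>M. pochhammer (\<gamma> + real M) (Suc i)) at_top sequentially"
    by (rule filterlim_at_top_mono)
  then have "(\<lambda>M. pochhammer \<alpha> j * pochhammer \<beta> j / fact j / pochhammer (\<gamma> + real M) j) \<longlonglongrightarrow> 0"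
    unfolding Suc by (intro tendsto_divide_0[OF tendsto_const] filterlim_at_top_imp_at_infinity)
  then show ?thesis
    using Suc by (simp add: hyp2F1_coeff_def mult.commute)
qed simp

lemma abs_hyp2F1_coeff_antimono:
  assumes "0 < \<gamma>" "\<gamma> \<le> \<gamma>'"
  shows "\<bar>hyp2F1_coeff \<alpha> \<beta> \<gamma>' j\<bar> \<le> \<bar>hyp2F1_coeff \<alpha> \<beta> \<gamma> j\<bar>"
proof -
  define f where "f = \<bar>pochhammer \<alpha> j * pochhammer \<beta> j / fact j\<bar>"
  have abs_coeff: "\<bar>hyp2F1_coeff \<alpha> \<beta> g j\<bar> = f / pochhammer g j" if "g > 0" for g
    using pochhammer_pos[OF that, of j] by (simp add: hyp2F1_coeff_def f_def abs_mult)
  have "0 < pochhammer \<gamma> j" "pochhammer \<gamma> j \<le> pochhammer \<gamma>' j"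
    using assms by (auto intro: pochhammer_pos pochhammer_mono)
  then have "f / pochhammer \<gamma>' j \<le> f / pochhammer \<gamma> j"
    by (intro divide_left_mono) (auto simp: f_def)
  then show ?thesis
    using assms by (simp add: abs_coeff)
qed

lemma hyp2F1_1_LIMSEQ_shift:
  assumes "\<gamma> > 0" "\<gamma> > \<alpha> + \<beta>"
  shows "(\<lambda>M. hyp2F1 \<alpha> \<beta> (\<gamma> + real M) 1) \<longlonglongrightarrow> 1"
proof -
  have "\<forall>\<^sub>F (j, M) in at_top \<times>\<^sub>F sequentially.
      norm (hyp2F1_coeff \<alpha> \<beta> (\<gamma> + real M) j) \<le> \<bar>hyp2F1_coeff \<alpha> \<beta> \<gamma> j\<bar>"
    using assms by (intro always_eventually) (auto intro: abs_hyp2F1_coeff_antimono)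
  from tannerys_theorem[OF hyp2F1_coeff_LIMSEQ_shift[OF assms(1)] this summable_hyp2F1_coeff[OF assms]]
  have "(\<lambda>M. \<Sum>j. hyp2F1_coeff \<alpha> \<beta> (\<gamma> + real M) j) \<longlonglongrightarrow> (\<Sum>j. if j = 0 then 1 else 0)"
    by simp
  moreover have "(\<Sum>j. if j = 0 then 1 else 0 :: real) = 1"
    using sums_single[of 0 "\<lambda>_. 1::real"] by (simp add: sums_iff)
  ultimately show ?thesis
    by (simp add: hyp2F1_at_1)
qed
theorem Gauss_hyp2F1_1:
  assumes "\<gamma> > 0" "\<gamma> > \<alpha> + \<beta>"
  shows "hyp2F1 \<alpha> \<beta> \<gamma> 1 = rGamma (\<gamma> - \<alpha>) * rGamma (\<gamma> - \<beta>) / (rGamma \<gamma> * rGamma (\<gamma> - \<alpha> - \<beta>))"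
proof -
  define \<sigma> where "\<sigma> = \<gamma> - \<alpha> - \<beta>"
  have "\<sigma> > 0"
    using assms by (simp add: \<sigma>_def)
  define R where "R x n = pochhammer x (Suc n) / (fact n * real n powr x)" for x n
  have "(\<lambda>n. R (\<gamma> - \<alpha>) n * R (\<gamma> - \<beta>) n / (R \<gamma> n * R \<sigma> n) * hyp2F1 \<alpha> \<beta> (\<gamma> + real (Suc n)) 1)
      \<longlonglongrightarrow> rGamma (\<gamma> - \<alpha>) * rGamma (\<gamma> - \<beta>) / (rGamma \<gamma> * rGamma \<sigma>) * 1"
    unfolding R_def using assms \<open>\<sigma> > 0\<close>
    by (intro tendsto_intros pochhammer_Suc_LIMSEQ LIMSEQ_Suc[OF hyp2F1_1_LIMSEQ_shift])
      (auto simp: rGamma_eq_zero_iff elim: nonpos_Ints_cases)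
  moreover have "\<forall>\<^sub>F n in sequentially.
      R (\<gamma> - \<alpha>) n * R (\<gamma> - \<beta>) n / (R \<gamma> n * R \<sigma> n) * hyp2F1 \<alpha> \<beta> (\<gamma> + real (Suc n)) 1 = hyp2F1 \<alpha> \<beta> \<gamma> 1"
    using eventually_gt_at_top[of "0::nat"]
  proof eventually_elim
    case (elim n)
    have "pochhammer \<gamma> (Suc n) > 0" "pochhammer \<sigma> (Suc n) > 0" "(fact n :: real) > 0"
      using assms \<open>\<sigma> > 0\<close> by (simp_all add: pochhammer_pos)
    moreover have "real n powr (\<gamma> - \<alpha>) * real n powr (\<gamma> - \<beta>) = real n powr \<gamma> * real n powr \<sigma>"
      by (simp add: \<sigma>_def flip: powr_add)
    moreover note hyp2F1_1_pochhammer_shift[OF assms, of "Suc n"]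
    ultimately show ?case
      using elim unfolding R_def \<sigma>_def by (simp add: field_simps)
  qed
  ultimately show ?thesis
    by (simp add: tendsto_cong \<sigma>_def LIMSEQ_const_iff)
qed

section \<open>Moments of the hypergeometric weights\<close>

lemma Beta_set_integral_Ioo:
  fixes p q :: real
  assumes "p > 0" "q > 0"
  shows "set_integrable lborel {0<..<1} (\<lambda>x. x powr (p - 1) * (1 - x) powr (q - 1))"
    and "(LINT x:{0<..<1}|lborel. x powr (p - 1) * (1 - x) powr (q - 1)) = Beta p q"
proof -
  have integrable: "set_integrable lborel {0..1} (\<lambda>x. x powr (p - 1) * (1 - x) powr (q - 1))"
    using assms by (rule integrable_Beta)
  then show "set_integrable lborel {0<..<1} (\<lambda>x. x powr (p - 1) * (1 - x) powr (q - 1))"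
    by (rule set_integrable_subset) auto
  have "(LINT x:{0<..<1}|lborel. x powr (p - 1) * (1 - x) powr (q - 1))
      = (LINT x:{0..1}|lborel. x powr (p - 1) * (1 - x) powr (q - 1))"
  proof (rule set_integral_cong_set)
    show "AE x in lborel. ((x::real) \<in> {0..1}) = (x \<in> {0<..<1})"
      using AE_lborel_singleton[of "0::real"] AE_lborel_singleton[of "1::real"]
      by eventually_elim auto
  qed (unfold set_borel_measurable_def; measurable)+
  also have "\<dots> = integral {0..1} (\<lambda>x. x powr (p - 1) * (1 - x) powr (q - 1))"
    by (rule set_borel_integral_eq_integral(2)[OF integrable])
  also have "\<dots> = Beta p q"
    using has_integral_Beta_real[OF assms] by (rule integral_unique)
  finally show "(LINT x:{0<..<1}|lborel. x powr (p - 1) * (1 - x) powr (q - 1)) = Beta p q" .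
qed

lemma set_integral_sum:
  fixes f :: "'i \<Rightarrow> 'a \<Rightarrow> real"
  assumes "\<And>i. i \<in> I \<Longrightarrow> set_integrable M S (f i)"
  shows "set_integrable M S (\<lambda>x. \<Sum>i\<in>I. f i x)"
    and "(LINT x:S|M. (\<Sum>i\<in>I. f i x)) = (\<Sum>i\<in>I. LINT x:S|M. f i x)"
  using assms
  by (simp_all add: set_integrable_def set_lebesgue_integral_def sum_distrib_left integral_sum)

lemma set_integral_suminf:
  fixes f :: "nat \<Rightarrow> 'a \<Rightarrow> real"
  assumes integrable: "\<And>j. set_integrable M S (f j)"
    and summable: "\<And>x. x \<in> S \<Longrightarrow> summable (\<lambda>j. \<bar>f j x\<bar>)"
    and summable_integrals: "summable (\<lambda>j. LINT x:S|M. \<bar>f j x\<bar>)"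
  shows "set_integrable M S (\<lambda>x. \<Sum>j. f j x)"
    and "(LINT x:S|M. (\<Sum>j. f j x)) = (\<Sum>j. LINT x:S|M. f j x)"
proof -
  define g where "g = (\<lambda>j x. indicator S x * f j x)"
  have "integrable M (g j)" for j
    using integrable by (simp add: g_def set_integrable_def)
  moreover have "AE x in M. summable (\<lambda>j. norm (g j x))"
    using summable by (intro AE_I2) (simp add: g_def abs_mult indicator_def)
  moreover have "summable (\<lambda>j. \<integral>x. norm (g j x) \<partial>M)"
    using summable_integrals by (simp add: g_def set_lebesgue_integral_def abs_mult)
  ultimately have "integrable M (\<lambda>x. \<Sum>j. g j x)" "(\<integral>x. (\<Sum>j. g j x) \<partial>M) = (\<Sum>j. integral\<^sup>L M (g j))"
    by (rule integrable_suminf, rule integral_suminf)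
  moreover have "indicator S x * (\<Sum>j. f j x) = (\<Sum>j. g j x)" for x
    using summable_rabs_cancel[OF summable] by (simp add: g_def indicator_def)
  ultimately show "set_integrable M S (\<lambda>x. \<Sum>j. f j x)"
    and "(LINT x:S|M. (\<Sum>j. f j x)) = (\<Sum>j. LINT x:S|M. f j x)"
    by (simp_all add: set_integrable_def set_lebesgue_integral_def g_def)
qed
lemma summable_hyp2F1_coeff_power:
  assumes "\<gamma> > 0" "0 \<le> z" "z < 1"
  shows "summable (\<lambda>j. \<bar>hyp2F1_coeff \<alpha> \<beta> \<gamma> j\<bar> * z ^ j)"
proof -
  define \<rho> where "\<rho> n = (\<alpha> + n) * (\<beta> + n) / ((\<gamma> + n) * (n + 1))" for n :: nat
  define c where "c = (1 + z) / 2"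
  have "(\<lambda>n. \<bar>\<rho> n\<bar> * z) \<longlonglongrightarrow> \<bar>1\<bar> * z"
    unfolding \<rho>_def by (intro tendsto_intros) real_asymp
  moreover have "\<bar>1\<bar> * z < c"
    using assms by (simp add: c_def)
  ultimately obtain N where N: "\<And>n. n \<ge> N \<Longrightarrow> \<bar>\<rho> n\<bar> * z < c"
    by (metis (no_types, lifting) eventually_sequentially order_tendstoD(2))
  show ?thesis
  proof (rule summable_ratio_test)
    show "c < 1"
      using assms by (simp add: c_def)
  next
    fix n assume "n \<ge> N"
    have "norm (\<bar>hyp2F1_coeff \<alpha> \<beta> \<gamma> (Suc n)\<bar> * z ^ Suc n) = (\<bar>\<rho> n\<bar> * z) * (\<bar>hyp2F1_coeff \<alpha> \<beta> \<gamma> n\<bar> * z ^ n)"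
      using assms by (simp add: hyp2F1_coeff_Suc \<rho>_def abs_mult)
    also have "\<dots> \<le> c * (\<bar>hyp2F1_coeff \<alpha> \<beta> \<gamma> n\<bar> * z ^ n)"
      using N[OF \<open>n \<ge> N\<close>] assms by (intro mult_right_mono) auto
    finally show "norm (\<bar>hyp2F1_coeff \<alpha> \<beta> \<gamma> (Suc n)\<bar> * z ^ Suc n) \<le> c * norm (\<bar>hyp2F1_coeff \<alpha> \<beta> \<gamma> n\<bar> * z ^ n)"
      using assms by simp
  qed
qed

lemma hyp2F1_sums:
  assumes "\<gamma> > 0" "0 \<le> z" "z < 1"
  shows "(\<lambda>j. hyp2F1_coeff \<alpha> \<beta> \<gamma> j * z ^ j) sums hyp2F1 \<alpha> \<beta> \<gamma> z"
proof -
  have "summable (\<lambda>j. \<bar>hyp2F1_coeff \<alpha> \<beta> \<gamma> j * z ^ j\<bar>)"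
    using summable_hyp2F1_coeff_power[OF assms] assms(2) by (simp add: abs_mult)
  then have "summable (\<lambda>j. hyp2F1_coeff \<alpha> \<beta> \<gamma> j * z ^ j)"
    by (rule summable_rabs_cancel)
  then show ?thesis
    unfolding hyp2F1_altdef by (rule summable_sums)
qed

lemma hyp2F1_coeff_Beta:
  assumes "p > 0" "\<delta> > 0"
  shows "hyp2F1_coeff \<alpha> \<beta> \<delta> j * Beta p (\<delta> + j) = Beta p \<delta> * hyp2F1_coeff \<alpha> \<beta> (p + \<delta>) j"
proof -
  have "\<delta> \<notin> \<int>\<^sub>\<le>\<^sub>0" "p + \<delta> \<notin> \<int>\<^sub>\<le>\<^sub>0"
    using assms by auto
  then have "Gamma (\<delta> + j) = pochhammer \<delta> j * Gamma \<delta>" "Gamma (p + (\<delta> + j)) = pochhammer (p + \<delta>) j * Gamma (p + \<delta>)"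
    by (simp_all add: Gamma_add_of_nat flip: add.assoc)
  moreover have "Gamma (p + \<delta>) > 0" "pochhammer \<delta> j > 0" "pochhammer (p + \<delta>) j > 0"
    using assms by (simp_all add: Gamma_real_pos pochhammer_pos)
  ultimately show ?thesis
    by (simp add: Beta_def hyp2F1_coeff_def field_simps)
qed

lemma abs_hyp2F1_coeff_Beta:
  assumes "p > 0" "\<delta> > 0"
  shows "\<bar>hyp2F1_coeff \<alpha> \<beta> \<delta> j\<bar> * Beta p (\<delta> + j) = Beta p \<delta> * \<bar>hyp2F1_coeff \<alpha> \<beta> (p + \<delta>) j\<bar>"
proof -
  have "Beta p \<delta> > 0" "Beta p (\<delta> + j) > 0"
    using assms by (simp_all add: Beta_def Gamma_real_pos add_pos_nonneg)
  then show ?thesis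
    using hyp2F1_coeff_Beta[OF assms, of \<alpha> \<beta> j] by (metis abs_mult abs_of_pos)
qed

lemma hyp2F1_Beta_integral:
  fixes p \<delta> :: real
  assumes p_pos: "p > 0" and \<delta>_pos: "\<delta> > 0" and conv: "p + \<delta> > \<alpha> + \<beta>"
  shows "set_integrable lborel {0<..<1} (\<lambda>x. hyp2F1 \<alpha> \<beta> \<delta> (1 - x) * (x powr (p - 1) * (1 - x) powr (\<delta> - 1)))"
    and "(LINT x:{0<..<1}|lborel. hyp2F1 \<alpha> \<beta> \<delta> (1 - x) * (x powr (p - 1) * (1 - x) powr (\<delta> - 1)))
         = Beta p \<delta> * hyp2F1 \<alpha> \<beta> (p + \<delta>) 1"
proof -
  define t where "t j x = hyp2F1_coeff \<alpha> \<beta> \<delta> j * (x powr (p - 1) * (1 - x) powr (\<delta> + j - 1))"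
    for j :: nat and x :: real
  have Beta_j: "set_integrable lborel {0<..<1} (\<lambda>x. x powr (p - 1) * (1 - x) powr (\<delta> + j - 1))"
    "(LINT x:{0<..<1}|lborel. x powr (p - 1) * (1 - x) powr (\<delta> + j - 1)) = Beta p (\<delta> + j)" for j :: nat
    using Beta_set_integral_Ioo[of p "\<delta> + j"] p_pos \<delta>_pos by (simp_all add: add_pos_nonneg)
  have t_split: "t j x = x powr (p - 1) * (1 - x) powr (\<delta> - 1) * (hyp2F1_coeff \<alpha> \<beta> \<delta> j * (1 - x) ^ j)"
    if "x \<in> {0<..<1}" for j x
    using that by (simp add: t_def algebra_simps flip: powr_add powr_realpow)
  have t_integrable: "set_integrable lborel {0<..<1} (t j)" for j
    unfolding t_def using Beta_j(1) by simp
  have t_summable: "summable (\<lambda>j. \<bar>t j x\<bar>)" if "x \<in> {0<..<1}" for x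
    using summable_mult[OF summable_hyp2F1_coeff_power[of \<delta> "1 - x" \<alpha> \<beta>], of "x powr (p - 1) * (1 - x) powr (\<delta> - 1)"]
      that \<delta>_pos by (simp add: t_split abs_mult mult_ac)
  have "(LINT x:{0<..<1}|lborel. \<bar>t j x\<bar>) = Beta p \<delta> * \<bar>hyp2F1_coeff \<alpha> \<beta> (p + \<delta>) j\<bar>" for j
    using Beta_j(2) abs_hyp2F1_coeff_Beta[OF p_pos \<delta>_pos] by (simp add: t_def abs_mult)
  moreover have "summable (\<lambda>j. Beta p \<delta> * \<bar>hyp2F1_coeff \<alpha> \<beta> (p + \<delta>) j\<bar>)"
    using p_pos \<delta>_pos conv by (intro summable_mult summable_hyp2F1_coeff) auto
  ultimately have "summable (\<lambda>j. LINT x:{0<..<1}|lborel. \<bar>t j x\<bar>)"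
    by simp
  note series = set_integral_suminf[OF t_integrable t_summable this]
  have sum_t: "hyp2F1 \<alpha> \<beta> \<delta> (1 - x) * (x powr (p - 1) * (1 - x) powr (\<delta> - 1)) = (\<Sum>j. t j x)"
    if "x \<in> {0<..<1}" for x
    using sums_mult[OF hyp2F1_sums[of \<delta> "1 - x" \<alpha> \<beta>], of "x powr (p - 1) * (1 - x) powr (\<delta> - 1)"] that \<delta>_pos
    by (simp add: t_split sums_iff mult_ac)
  show "set_integrable lborel {0<..<1} (\<lambda>x. hyp2F1 \<alpha> \<beta> \<delta> (1 - x) * (x powr (p - 1) * (1 - x) powr (\<delta> - 1)))"
    using series(1) sum_t set_integrable_cong[of lborel lborel "{0<..<1}" "{0<..<1}"
        "\<lambda>x. hyp2F1 \<alpha> \<beta> \<delta> (1 - x) * (x powr (p - 1) * (1 - x) powr (\<delta> - 1))" "\<lambda>x. \<Sum>j. t j x"]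
    by simp
  have "(LINT x:{0<..<1}|lborel. hyp2F1 \<alpha> \<beta> \<delta> (1 - x) * (x powr (p - 1) * (1 - x) powr (\<delta> - 1)))
      = (LINT x:{0<..<1}|lborel. (\<Sum>j. t j x))"
    by (rule set_lebesgue_integral_cong) (simp_all add: sum_t)
  also have "\<dots> = (\<Sum>j. LINT x:{0<..<1}|lborel. t j x)"
    by (rule series(2))
  also have "\<dots> = (\<Sum>j. Beta p \<delta> * hyp2F1_coeff \<alpha> \<beta> (p + \<delta>) j)"
    using hyp2F1_coeff_Beta[OF p_pos \<delta>_pos] Beta_j(2) by (simp add: t_def)
  also have "\<dots> = Beta p \<delta> * hyp2F1 \<alpha> \<beta> (p + \<delta>) 1"
    using summable_rabs_cancel[OF summable_hyp2F1_coeff[of "p + \<delta>" \<alpha> \<beta>]] p_pos \<delta>_pos conv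
    by (simp add: hyp2F1_at_1 suminf_mult)
  finally show "(LINT x:{0<..<1}|lborel. hyp2F1 \<alpha> \<beta> \<delta> (1 - x) * (x powr (p - 1) * (1 - x) powr (\<delta> - 1)))
      = Beta p \<delta> * hyp2F1 \<alpha> \<beta> (p + \<delta>) 1" .
qed

definition mu_moment :: "real \<Rightarrow> real \<Rightarrow> real \<Rightarrow> real \<Rightarrow> nat \<Rightarrow> nat \<Rightarrow> real" where
  "mu_moment a b c d e m = pochhammer a m * pochhammer b (m + e) / (pochhammer c (m + e) * pochhammer d m)"

lemma power_mult_mu_density:
  assumes "x > 0"
  shows "x ^ m * mu_density a b c d x = Gamma c * Gamma d / (Gamma a * Gamma b * Gamma (c + d - a - b))
           * (x powr (a + m - 1) * (1 - x) powr (c + d - a - b - 1))"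
proof -
  have "x ^ m * x powr (a - 1) = x powr (a + m - 1)"
    using assms by (simp add: algebra_simps flip: powr_realpow powr_add)
  then show ?thesis
    by (simp add: mu_density_def mult_ac)
qed

lemma mu_moment_Gamma:
  fixes a b c d :: real
  assumes "a \<notin> \<int>\<^sub>\<le>\<^sub>0" "b \<notin> \<int>\<^sub>\<le>\<^sub>0" "c \<notin> \<int>\<^sub>\<le>\<^sub>0" "d \<notin> \<int>\<^sub>\<le>\<^sub>0"
  shows "mu_moment a b c d e m = Gamma c * Gamma d * Gamma (a + m) * Gamma (b + real (m + e))
           / (Gamma a * Gamma b * Gamma (c + real (m + e)) * Gamma (d + m))"
proof -
  have "Gamma a \<noteq> 0" "Gamma b \<noteq> 0" "Gamma c \<noteq> 0" "Gamma d \<noteq> 0"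
    using assms by (simp_all add: Gamma_nonzero)
  moreover have "pochhammer c (m + e) \<noteq> 0" "pochhammer d m \<noteq> 0"
    using assms(3,4) pochhammer_eq_0_imp_nonpos_Int by blast+
  ultimately show ?thesis
    using assms by (simp add: mu_moment_def Gamma_add_of_nat field_simps del: of_nat_add)
qed

lemma hyp2F1_mu_moment:
  fixes a b c d :: real and e m :: nat
  assumes a_pos: "a > 0" and b_pos: "b > 0" and \<delta>_pos: "c + d - a - b > 0"
    and c: "c \<notin> \<int>\<^sub>\<le>\<^sub>0" and d: "d \<notin> \<int>\<^sub>\<le>\<^sub>0"
  defines "f \<equiv> \<lambda>x. x ^ m * hyp2F1 (c - b) (d - b - e) (c + d - a - b) (1 - x) * mu_density a b c d x"
  shows "set_integrable lborel {0<..<1} f"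
    and "(LINT x:{0<..<1}|lborel. f x) = mu_moment a b c d e m"
proof -
  define \<delta> where "\<delta> = c + d - a - b"
  define K where "K = Gamma c * Gamma d / (Gamma a * Gamma b * Gamma \<delta>)"
  define g where "g x = hyp2F1 (c - b) (d - b - e) \<delta> (1 - x) * (x powr (a + m - 1) * (1 - x) powr (\<delta> - 1))" for x
  have "a + m > 0" "\<delta> > 0" "a + m + \<delta> > (c - b) + (d - b - e)"
    using a_pos b_pos \<delta>_pos by (auto simp: \<delta>_def add_pos_nonneg)
  note beta = hyp2F1_Beta_integral[OF this]
  have f_eq: "f x = K * g x" if "x \<in> {0<..<1}" for x
  proof -
    have "f x = (x ^ m * mu_density a b c d x) * hyp2F1 (c - b) (d - b - e) \<delta> (1 - x)"
      by (simp add: f_def \<delta>_def mult_ac)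
    also have "\<dots> = K * g x"
      using that by (subst power_mult_mu_density) (simp_all add: g_def K_def \<delta>_def mult_ac)
    finally show ?thesis .
  qed
  have "set_integrable lborel {0<..<1} (\<lambda>x. K * g x)"
    using beta(1) by (simp add: g_def)
  then show "set_integrable lborel {0<..<1} f"
    using set_integrable_cong[of lborel lborel "{0<..<1}" "{0<..<1}" f "\<lambda>x. K * g x"] f_eq by simp
  have "(LINT x:{0<..<1}|lborel. f x) = K * (Beta (a + m) \<delta> * hyp2F1 (c - b) (d - b - e) (a + m + \<delta>) 1)"
    using set_lebesgue_integral_cong[of "{0<..<1}" lborel f "\<lambda>x. K * g x"] f_eq beta(2) by (simp add: g_def)
  also have "\<dots> = mu_moment a b c d e m"
  proof -
    have diffs: "a + m + \<delta> - (c - b) = d + m" "a + m + \<delta> - (d - b - e) = c + real (m + e)"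
      "a + m + \<delta> - (c - b) - (d - b - e) = b + real (m + e)"
      by (simp_all add: \<delta>_def)
    have gauss: "hyp2F1 (c - b) (d - b - e) (a + m + \<delta>) 1
        = Gamma (a + m + \<delta>) * Gamma (b + real (m + e)) / (Gamma (d + m) * Gamma (c + real (m + e)))"
      using Gauss_hyp2F1_1[OF _ \<open>a + m + \<delta> > _\<close>] \<open>a + m > 0\<close> \<open>\<delta> > 0\<close>
      unfolding diffs by (simp add: rGamma_inverse_Gamma field_simps)
    have ab: "a \<notin> \<int>\<^sub>\<le>\<^sub>0" "b \<notin> \<int>\<^sub>\<le>\<^sub>0"
      using a_pos b_pos by auto
    have "Gamma \<delta> > 0" "Gamma (a + m + \<delta>) > 0"
      using \<open>\<delta> > 0\<close> \<open>a + m > 0\<close> by (simp_all add: Gamma_real_pos)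
    then show ?thesis
      unfolding mu_moment_Gamma[OF ab c d] gauss K_def Beta_def by (simp add: field_simps)
  qed
  finally show "(LINT x:{0<..<1}|lborel. f x) = mu_moment a b c d e m" .
qed

section \<open>The type I forms at 1\<close>

definition moment_weight :: "real \<Rightarrow> real \<Rightarrow> real \<Rightarrow> real \<Rightarrow> nat \<Rightarrow> nat \<Rightarrow> nat \<Rightarrow> nat \<Rightarrow> real" where
  "moment_weight a b c d p r N k = (-1) ^ (N - k) / (fact k * fact (N - k))
     * (pochhammer c (p + k) * pochhammer d (r + k)) / (pochhammer a k * pochhammer b k)"

lemma sum_moment_weight_mu_moment:
  fixes a b c d :: real
  assumes "a \<notin> \<int>\<^sub>\<le>\<^sub>0" "b \<notin> \<int>\<^sub>\<le>\<^sub>0" "c \<notin> \<int>\<^sub>\<le>\<^sub>0" "d \<notin> \<int>\<^sub>\<le>\<^sub>0"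
    and "p + r = N" "i + e \<le> p" "i \<le> r"
  shows "(\<Sum>k\<le>N. moment_weight a b c d p r N k * mu_moment a b c d e (k + i)) = 1"
proof -
  define Q where "Q = pochhammer_poly a i * pochhammer_poly b (i + e)
    * pochhammer_poly (c + of_nat (i + e)) (p - (i + e)) * pochhammer_poly (d + of_nat i) (r - i)"
  have "degree Q = N"
    using assms(5-7) by (simp add: Q_def degree_mult_eq)
  moreover have "lead_coeff Q = 1"
    unfolding Q_def by (simp only: lead_coeff_mult lead_coeff_pochhammer_poly mult_1)
  ultimately have coeff_Q: "coeff Q N = 1"
    by simp
  have "moment_weight a b c d p r N k * mu_moment a b c d e (k + i)
      = (-1) ^ (N - k) * of_nat (N choose k) * poly Q (of_nat k) / fact N" if "k \<le> N" for k
  proof -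
    have "pochhammer a (k + i) = pochhammer a k * pochhammer (a + k) i"
      "pochhammer b (k + i + e) = pochhammer b k * pochhammer (b + k) (i + e)"
      "pochhammer c (p + k) = pochhammer c (k + i + e) * pochhammer (c + real (k + i + e)) (p - (i + e))"
      "pochhammer d (r + k) = pochhammer d (k + i) * pochhammer (d + real (k + i)) (r - i)"
      using pochhammer_product'[of b k "i + e"] pochhammer_product'[of c "k + i + e" "p - (i + e)"]
        pochhammer_product'[of d "k + i" "r - i"] assms(6,7)
      by (simp_all add: pochhammer_product' add.assoc add.commute[of p] add.commute[of r])
    moreover have "real (N choose k) = fact N / (fact k * fact (N - k))"
      using binomial_fact[OF that] by simp
    moreover have "pochhammer a k \<noteq> 0" "pochhammer b k \<noteq> 0" "pochhammer c (k + i + e) \<noteq> 0" "pochhammer d (k + i) \<noteq> 0"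
      using assms(1-4) pochhammer_eq_0_imp_nonpos_Int by blast+
    ultimately show ?thesis
      by (simp add: moment_weight_def mu_moment_def Q_def add_ac field_simps)
  qed
  then have "(\<Sum>k\<le>N. moment_weight a b c d p r N k * mu_moment a b c d e (k + i))
      = (\<Sum>k\<le>N. (-1) ^ (N - k) * of_nat (N choose k) * poly Q (of_nat k)) / fact N"
    by (simp add: sum_divide_distrib)
  also have "\<dots> = 1"
    using alternating_binomial_sum_poly[of Q N] \<open>degree Q = N\<close> coeff_Q by simp
  finally show ?thesis .
qed

lemma typeI_not_nonpos_Ints:
  assumes "typeI a b c d N A1 A2"
  shows "c \<notin> \<int>\<^sub>\<le>\<^sub>0" and "d \<notin> \<int>\<^sub>\<le>\<^sub>0"
proof -
  have "(LINT x:{0<..<1}|lborel. x ^ N * lin_form a b c d A1 A2 x * mu_density a b c d x) = 1"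
    using assms by (simp add: typeI_def)
  then have "mu_density a b c d \<noteq> (\<lambda>_. 0)"
    by auto
  then have "Gamma c \<noteq> 0" "Gamma d \<noteq> 0"
    by (auto simp: mu_density_def fun_eq_iff)
  then show "c \<notin> \<int>\<^sub>\<le>\<^sub>0" and "d \<notin> \<int>\<^sub>\<le>\<^sub>0"
    by (auto simp: Gamma_eq_zero_iff)
qed

lemma typeI_coeff_eq_0:
  assumes "typeI a b c d N A1 A2"
  shows "i \<ge> N div 2 + 1 \<Longrightarrow> coeff A1 i = 0" and "i \<ge> (N + 1) div 2 \<Longrightarrow> coeff A2 i = 0"
  using assms by (auto simp: typeI_def intro!: coeff_eq_0 split: if_splits)

lemma lin_form_moment:
  fixes a b c d :: real
  assumes "a > 0" "b > 0" "c + d - a - b > 0" "c \<notin> \<int>\<^sub>\<le>\<^sub>0" "d \<notin> \<int>\<^sub>\<le>\<^sub>0"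
    and "\<And>i. i \<ge> s \<Longrightarrow> coeff A1 i = 0" "\<And>i. i \<ge> t \<Longrightarrow> coeff A2 i = 0"
  shows "(LINT x:{0<..<1}|lborel. x ^ k * lin_form a b c d A1 A2 x * mu_density a b c d x)
       = (\<Sum>i<s. coeff A1 i * mu_moment a b c d 0 (k + i))
         + c / b * (\<Sum>i<t. coeff A2 i * mu_moment a b c d 1 (k + i))"
proof -
  define F where "F e m x = x ^ m * hyp2F1 (c - b) (d - b - real e) (c + d - a - b) (1 - x) * mu_density a b c d x"
    for e m :: nat and x :: real
  note moment = hyp2F1_mu_moment[OF assms(1-5), folded F_def]
  have "x ^ k * lin_form a b c d A1 A2 x * mu_density a b c d x
      = (\<Sum>i<s. coeff A1 i * F 0 (k + i) x) + (\<Sum>i<t. c / b * coeff A2 i * F 1 (k + i) x)" for x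
    using poly_eq_sum_lessThan[OF assms(6)] poly_eq_sum_lessThan[OF assms(7)]
    by (simp add: lin_form_def w1_def w2_def F_def power_add sum_distrib_left sum_distrib_right
        sum_divide_distrib algebra_simps)
  then show ?thesis
    using moment by (simp add: set_integral_add set_integral_sum sum_distrib_left mult_ac)
qed

lemma typeI_lin_form_at_1:
  fixes a b c d :: real
  assumes "a > 0" "b > 0" "c + d - a - b > 0" and typeI: "typeI a b c d N A1 A2"
  shows "lin_form a b c d A1 A2 1 = moment_weight a b c d ((N + 1) div 2) (N div 2) N N"
proof -
  define p where "p = (N + 1) div 2"
  define r where "r = N div 2"
  define I where "I k = (LINT x:{0<..<1}|lborel. x ^ k * lin_form a b c d A1 A2 x * mu_density a b c d x)" for k
  define w where "w = moment_weight a b c d p r N"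
  have c: "c \<notin> \<int>\<^sub>\<le>\<^sub>0" and d: "d \<notin> \<int>\<^sub>\<le>\<^sub>0"
    using typeI_not_nonpos_Ints[OF typeI] by auto
  have ab: "a \<notin> \<int>\<^sub>\<le>\<^sub>0" "b \<notin> \<int>\<^sub>\<le>\<^sub>0"
    using assms by auto
  note A1_coeff = typeI_coeff_eq_0(1)[OF typeI, folded r_def]
  note A2_coeff = typeI_coeff_eq_0(2)[OF typeI, folded p_def]
  have I_eq: "I k = (\<Sum>i<r + 1. coeff A1 i * mu_moment a b c d 0 (k + i))
      + c / b * (\<Sum>i<p. coeff A2 i * mu_moment a b c d 1 (k + i))" for k
    unfolding I_def using lin_form_moment[OF assms(1-3) c d A1_coeff A2_coeff] by blast
  have "(\<Sum>k\<le>N. w k * I k) = w N"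
    using typeI by (simp add: typeI_def I_def lessThan_Suc_atMost[symmetric])
  moreover have "(\<Sum>k\<le>N. w k * I k) = lin_form a b c d A1 A2 1"
  proof -
    have "(\<Sum>k\<le>N. w k * I k)
        = (\<Sum>i<r + 1. coeff A1 i * (\<Sum>k\<le>N. w k * mu_moment a b c d 0 (k + i)))
          + c / b * (\<Sum>i<p. coeff A2 i * (\<Sum>k\<le>N. w k * mu_moment a b c d 1 (k + i)))"
      unfolding I_eq by (simp add: sum_distrib_left sum.distrib algebra_simps sum.swap[of _ "{..N}"])
    also have "\<dots> = (\<Sum>i<r + 1. coeff A1 i) + c / b * (\<Sum>i<p. coeff A2 i)"
      using sum_moment_weight_mu_moment[OF ab c d, of p r N] unfolding w_def p_def r_def
      by (simp add: add.commute[of _ 1])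
    also have "\<dots> = lin_form a b c d A1 A2 1"
      using poly_eq_sum_lessThan[OF A1_coeff, where x = 1] poly_eq_sum_lessThan[OF A2_coeff, where x = 1]
      by (simp add: lin_form_def w1_def w2_def)
    finally show ?thesis .
  qed
  ultimately show ?thesis
    by (simp add: w_def p_def r_def)
qed

(* The hypotheses on d - a, d - b, c + 1 - a and c - b only serve the existence of q^(n);
   the value at 1 does not need them, and c, d are not poles by typeI_not_nonpos_Ints. *)
theorem theorem7:
  fixes a b c d :: real
  assumes "a > 0" and "b > 0" and "c + d - a - b > 0"
    and "not_nonpos_int (d - a)" and "not_nonpos_int (d - b)"
    and "not_nonpos_int (c + 1 - a)" and "not_nonpos_int (c - b)"
  shows "\<forall>n::nat. \<forall>A1 A2.
     (typeI a b c d (2 * n) A1 A2 \<longrightarrow>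
        poly A1 1 * w1 a b c d 1 + poly A2 1 * w2 a b c d 1
        = 1 / fact (2 * n) * (pochhammer c (3 * n) * pochhammer d (3 * n))
            / (pochhammer a (2 * n) * pochhammer b (2 * n)))
   \<and> (typeI a b c d (2 * n + 1) A1 A2 \<longrightarrow>
        poly A1 1 * w1 a b c d 1 + poly A2 1 * w2 a b c d 1
        = 1 / fact (2 * n + 1) * (pochhammer c (3 * n + 2) * pochhammer d (3 * n + 1))
            / (pochhammer a (2 * n + 1) * pochhammer b (2 * n + 1)))"
proof (intro allI conjI impI)
  fix n :: nat and A1 A2 :: "real poly"
  assume "typeI a b c d (2 * n) A1 A2"
  from typeI_lin_form_at_1[OF assms(1-3) this]
  show "poly A1 1 * w1 a b c d 1 + poly A2 1 * w2 a b c d 1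
        = 1 / fact (2 * n) * (pochhammer c (3 * n) * pochhammer d (3 * n))
            / (pochhammer a (2 * n) * pochhammer b (2 * n))"
    by (simp add: lin_form_def moment_weight_def)
next
  fix n :: nat and A1 A2 :: "real poly"
  assume "typeI a b c d (2 * n + 1) A1 A2"
  from typeI_lin_form_at_1[OF assms(1-3) this]
  show "poly A1 1 * w1 a b c d 1 + poly A2 1 * w2 a b c d 1
        = 1 / fact (2 * n + 1) * (pochhammer c (3 * n + 2) * pochhammer d (3 * n + 1))
            / (pochhammer a (2 * n + 1) * pochhammer b (2 * n + 1))"
    by (simp add: lin_form_def moment_weight_def)
qed

end
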